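(* Let $Q$ be a quantale, $M$ a shrinkable $Q$-module, and $\mathcal{F},\mathcal{G}\in\operatorname{mF}(Q)$ such that $\mathcal{F}+\mathcal{G}$ is 1-step over $M$. Then: (a) if there exists $\mathcal{H}\in\operatorname{mF}(Q)$ localizable over $M$ with $\mathcal{F}\cap\mathcal{G}\subseteq\mathcal{H}\subseteq\mathcal{F}$, then $\mathcal{F}$ is localizable over $M$; (b) if $sm=m$ for all $s\in\mathcal{F}\cap\mathcal{G}$ and $m\in M$, then both $\mathcal{F}$ and $\mathcal{G}$ are 1-step over $M$.
   Context: A quantale is a poset $Q$ in which every nonempty subset has a join $\sum$ (binary join $a+b$; no bottom required), with top $1$ and a commutative associative multiplication with unit $1$ distributing over nonempty joins. A $Q$-module is a poset $M$ with all nonempty joins and an associative unital action $Q\times M\to M$ distributing over nonempty joins in each variable. A multiplicative filter (m-filter) is a subset of $Q$ containing $1$, upward closed and closed under multiplication; $\operatorname{mF}(Q)$ is the set of them; $\mathcal{F}+\mathcal{G}$ is the smallest m-filter containing $\mathcal{F}\cup\mathcal{G}$. For $x,x_i$ write $x\le^*\sum_{i\in I}x_i$ if $x\le\sum_{i\in I_0}x_i$ for a finite nonempty $I_0\subseteq I$. $M$ is shrinkable if whenever $x\le\sum_ix_i$ there is a family $(y_j)$ with $x=\sum_jy_j$ and each $y_j\le^*\sum_ix_i$. For $a,b\in M$: $a\preceq^1_\mathcal{F}b$ means there are families $(a_i)$ in $M$, $(s_i)$ in $\mathcal{F}$ with $a\le\sum_ia_i$, $s_ia_i\le b$; $a\preceq^n_\mathcal{F}b$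 means a chain of $n$ such steps through elements of $M$; $a\preceq_\mathcal{F}b$ means $a\preceq^n_\mathcal{F}b$ for some $n\ge1$. $\mathcal{F}$ is localizable over $M$ if for each $b\in M$ there is $n_b\in\mathbb{N}$ with $a\preceq_\mathcal{F}b\Rightarrow a\preceq^{n_b}_\mathcal{F}b$ for all $a$; $\mathcal{F}$ is 1-step over $M$ if it is localizable over $M$ and $a\preceq_\mathcal{F}b$ implies $a\preceq^1_\mathcal{F}b$. *)

theory Defs
  imports Main
begin

definition is_join :: "'a::order set \<Rightarrow> 'a \<Rightarrow> bool" where
  "is_join S x \<longleftrightarrow> (\<forall>y\<in>S. y \<le> x) \<and> (\<forall>z. (\<forall>y\<in>S. y \<le> z) \<longrightarrow> x \<le> z)"

definition has_ne_joins :: "'a::order itself \<Rightarrow> bool" where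
  "has_ne_joins _ \<longleftrightarrow> (\<forall>S::'a set. S \<noteq> {} \<longrightarrow> (\<exists>x. is_join S x))"

definition Join :: "'a::order set \<Rightarrow> 'a" where
  "Join S = (THE x. is_join S x)"

definition quantale :: "('q::order \<Rightarrow> 'q \<Rightarrow> 'q) \<Rightarrow> 'q \<Rightarrow> bool" where
  "quantale mult e \<longleftrightarrow>
     has_ne_joins TYPE('q) \<and>
     (\<forall>x. x \<le> e) \<and>
     (\<forall>a b. mult a b = mult b a) \<and>
     (\<forall>a b c. mult (mult a b) c = mult a (mult b c)) \<and>
     (\<forall>a. mult e a = a) \<and>
     (\<forall>a S. S \<noteq> {} \<longrightarrow> mult a (Join S) = Join (mult a ` S))"

definition qmodule ::
  "('q::order \<Rightarrow> 'q \<Rightarrow> 'q) \<Rightarrow> 'q \<Rightarrow> ('q \<Rightarrow> 'm::order \<Rightarrow> 'm) \<Rightarrow> bool" where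
  "qmodule mult e act \<longleftrightarrow>
     has_ne_joins TYPE('m) \<and>
     (\<forall>a b m. act (mult a b) m = act a (act b m)) \<and>
     (\<forall>m. act e m = m) \<and>
     (\<forall>S m. S \<noteq> {} \<longrightarrow> act (Join S) m = Join ((\<lambda>a. act a m) ` S)) \<and>
     (\<forall>a T. T \<noteq> {} \<longrightarrow> act a (Join T) = Join (act a ` T))"

definition le_star :: "'m::order \<Rightarrow> 'i set \<Rightarrow> ('i \<Rightarrow> 'm) \<Rightarrow> bool" where
  "le_star x I xs \<longleftrightarrow> (\<exists>I0. I0 \<subseteq> I \<and> finite I0 \<and> I0 \<noteq> {} \<and> x \<le> Join (xs ` I0))"

text \<open>Shrinkable: families are represented by (nonempty) index sets of type 'm
  together with an indexing function; the covering family (y_j) likewise.\<close>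
definition shrinkable :: "'m::order itself \<Rightarrow> bool" where
  "shrinkable _ \<longleftrightarrow>
     (\<forall>(x::'m) (I::'m set) xs. I \<noteq> {} \<longrightarrow> x \<le> Join (xs ` I) \<longrightarrow>
        (\<exists>(J::'m set) ys. J \<noteq> {} \<and> x = Join (ys ` J) \<and> (\<forall>j\<in>J. le_star (ys j) I xs)))"

definition mfilter :: "('q::order \<Rightarrow> 'q \<Rightarrow> 'q) \<Rightarrow> 'q \<Rightarrow> 'q set \<Rightarrow> bool" where
  "mfilter mult e F \<longleftrightarrow> e \<in> F \<and> (\<forall>x y. x \<in> F \<longrightarrow> x \<le> y \<longrightarrow> y \<in> F) \<and>
     (\<forall>x y. x \<in> F \<longrightarrow> y \<in> F \<longrightarrow> mult x y \<in> F)"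

definition mfsum :: "('q::order \<Rightarrow> 'q \<Rightarrow> 'q) \<Rightarrow> 'q \<Rightarrow> 'q set \<Rightarrow> 'q set \<Rightarrow> 'q set" where
  "mfsum mult e F G = \<Inter>{H. mfilter mult e H \<and> F \<union> G \<subseteq> H}"

text \<open>a \<preceq>^1_F b: families (a_i),(s_i) indexed by a nonempty set I
  (index type 'm \<times> 'q, large enough for any family) with a \<le> \<Sum> a_i and s_i a_i \<le> b.\<close>
definition prec1 :: "('q::order \<Rightarrow> 'm::order \<Rightarrow> 'm) \<Rightarrow> 'q set \<Rightarrow> 'm \<Rightarrow> 'm \<Rightarrow> bool" where
  "prec1 act F a b \<longleftrightarrow>
     (\<exists>(I::('m \<times> 'q) set) as s. I \<noteq> {} \<and> a \<le> Join (as ` I) \<and>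
        (\<forall>i\<in>I. s i \<in> F \<and> act (s i) (as i) \<le> b))"

definition precn :: "('q::order \<Rightarrow> 'm::order \<Rightarrow> 'm) \<Rightarrow> 'q set \<Rightarrow> nat \<Rightarrow> 'm \<Rightarrow> 'm \<Rightarrow> bool" where
  "precn act F n = (prec1 act F ^^ n)"

definition prec :: "('q::order \<Rightarrow> 'm::order \<Rightarrow> 'm) \<Rightarrow> 'q set \<Rightarrow> 'm \<Rightarrow> 'm \<Rightarrow> bool" where
  "prec act F a b \<longleftrightarrow> (\<exists>n\<ge>1. precn act F n a b)"

definition localizable :: "('q::order \<Rightarrow> 'm::order \<Rightarrow> 'm) \<Rightarrow> 'q set \<Rightarrow> bool" where
  "localizable act F \<longleftrightarrow>
     (\<forall>b. \<exists>n\<ge>1. \<forall>a. prec act F a b \<longrightarrow> precn act F n a b)"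

definition one_step :: "('q::order \<Rightarrow> 'm::order \<Rightarrow> 'm) \<Rightarrow> 'q set \<Rightarrow> bool" where
  "one_step act F \<longleftrightarrow> localizable act F \<and> (\<forall>a b. prec act F a b \<longrightarrow> prec1 act F a b)"

end

theory Submission
  imports Defs
begin

(* Write sat F b for the join of all c with s c \<le> b for some s \<in> F, so that a \<preceq>^1_F b
   means a \<le> sat F b. If a \<preceq>_F b, then a \<preceq>_{F+G} b, hence a \<le> sat (F+G) b by the
   1-step hypothesis. Shrinkability reduces the joins involved to finite ones, where a single
   filter element serves for all terms; this splits the (F+G)-step into a \<preceq>^1_F d and
   d \<preceq>^1_G b with d \<le> a. The F-chain from a to b also starts at d, and the G-step d \<preceq>^1_G b
   lets each of its steps be moved into F \<inter> G. So every F-chain is one F-step followed by an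
   (F \<inter> G)-chain. In (a) that chain can be shortened to a fixed length n_b, since H is localizable;
   in (b) it collapses to d \<le> b because F \<inter> G acts trivially, whence a \<preceq>^1_F b. *)

lemma Join_eqI: "is_join S (x::'a::order) \<Longrightarrow> Join S = x"
  unfolding Join_def by (rule the_equality) (auto simp: is_join_def intro: order.antisym)

lemma is_join_Join: "has_ne_joins TYPE('a::order) \<Longrightarrow> S \<noteq> {} \<Longrightarrow> is_join S (Join (S::'a set))"
  unfolding has_ne_joins_def using Join_eqI by metis

lemma Join_upper: "has_ne_joins TYPE('a::order) \<Longrightarrow> (y::'a) \<in> S \<Longrightarrow> y \<le> Join S"
  using is_join_Join[of S] unfolding is_join_def by blast

lemma Join_least:
  "has_ne_joins TYPE('a::order) \<Longrightarrow> S \<noteq> {} \<Longrightarrow> (\<And>y. y \<in> S \<Longrightarrow> y \<le> z) \<Longrightarrow> Join S \<le> (z::'a)"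
  using is_join_Join[of S] unfolding is_join_def by blast

lemma Join_pair_eq_right: "(a::'a::order) \<le> b \<Longrightarrow> Join {a, b} = b"
  by (rule Join_eqI) (auto simp: is_join_def)

lemma Join_singleton: "Join {b::'a::order} = b"
  using Join_pair_eq_right[of b b] by simp

lemma shrinkable_setD:
  fixes x :: "'m::order"
  assumes "shrinkable TYPE('m)" and "S \<noteq> {}" and "x \<le> Join S"
  obtains T where "T \<noteq> {}" and "x = Join T"
    and "\<And>y. y \<in> T \<Longrightarrow> \<exists>S0\<subseteq>S. finite S0 \<and> S0 \<noteq> {} \<and> y \<le> Join S0"
proof -
  have "x \<le> Join (id ` S)"
    using assms(3) by simp
  then obtain J :: "'m set" and ys where J: "J \<noteq> {}" "x = Join (ys ` J)"
    and le: "\<forall>j\<in>J. le_star (ys j) S id"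
    using assms(1)[unfolded shrinkable_def, rule_format, where x = x and I = S and xs = id, OF assms(2)]
    by blast
  have fin: "\<exists>S0\<subseteq>S. finite S0 \<and> S0 \<noteq> {} \<and> y \<le> Join S0" if y: "y \<in> ys ` J" for y
  proof -
    obtain j where "j \<in> J" "y = ys j"
      using y by blast
    then show ?thesis
      using le unfolding le_star_def by auto
  qed
  show thesis
    using that[OF _ J(2) fin] J(1) by blast
qed

lemma precn_0: "precn act F 0 a b \<longleftrightarrow> a = b"
  unfolding precn_def by simp

lemma precn_Suc_0: "precn act F (Suc 0) = prec1 act F"
  unfolding precn_def by (fact relpowp_Suc_0)

lemma precn_Suc: "precn act F (Suc n) a b \<longleftrightarrow> (\<exists>c. prec1 act F a c \<and> precn act F n c b)"
  unfolding precn_def using relpowp_Suc_D2 relpowp_Suc_I2 by fast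

lemma prec_iff_precn_Suc: "prec act F a b \<longleftrightarrow> (\<exists>n. precn act F (Suc n) a b)"
  unfolding prec_def by (auto dest: Suc_le_D)

lemma one_stepD: "one_step act F \<Longrightarrow> prec act F a b \<Longrightarrow> prec1 act F a b"
  unfolding one_step_def by blast

lemma prec1_mono_filter: "F \<subseteq> F' \<Longrightarrow> prec1 act F a b \<Longrightarrow> prec1 act F' a b"
  unfolding prec1_def by blast

lemma precn_mono_filter: "F \<subseteq> F' \<Longrightarrow> precn act F n a b \<Longrightarrow> precn act F' n a b"
  by (induction n arbitrary: a) (auto simp: precn_0 precn_Suc dest: prec1_mono_filter)

lemma prec_mono_filter: "F \<subseteq> F' \<Longrightarrow> prec act F a b \<Longrightarrow> prec act F' a b"
  unfolding prec_def using precn_mono_filter by blast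

locale quantale_module =
  fixes mult :: "'q::order \<Rightarrow> 'q \<Rightarrow> 'q" and e :: 'q and act :: "'q \<Rightarrow> 'm::order \<Rightarrow> 'm"
  assumes quantale: "quantale mult e" and module: "qmodule mult e act"
begin

lemma joins_Q: "has_ne_joins TYPE('q)"
  using quantale unfolding quantale_def by (elim conjE)

lemma joins_M: "has_ne_joins TYPE('m)"
  using module unfolding qmodule_def by (elim conjE)

lemma le_unit: "x \<le> e"
  using quantale unfolding quantale_def by (elim conjE allE)

lemma mult_commute: "mult a b = mult b a"
  using quantale unfolding quantale_def by (elim conjE allE)

lemma mult_assoc: "mult (mult a b) c = mult a (mult b c)"
  using quantale unfolding quantale_def by (elim conjE allE)

lemma mult_unit: "mult e a = a"
  using quantale unfolding quantale_def by (elim conjE allE)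

lemma mult_Join: "S \<noteq> {} \<Longrightarrow> mult a (Join S) = Join (mult a ` S)"
  using quantale unfolding quantale_def by (elim conjE allE) (erule mp)

lemma act_mult: "act (mult a b) m = act a (act b m)"
  using module unfolding qmodule_def by (elim conjE allE)

lemma act_unit: "act e m = m"
  using module unfolding qmodule_def by (elim conjE allE)

lemma act_Join_left: "S \<noteq> {} \<Longrightarrow> act (Join S) m = Join ((\<lambda>a. act a m) ` S)"
  using module unfolding qmodule_def by (elim conjE allE) (erule mp)

lemma act_Join_right: "T \<noteq> {} \<Longrightarrow> act a (Join T) = Join (act a ` T)"
  using module unfolding qmodule_def by (elim conjE allE) (erule mp)

lemma mult_mono_right: "a \<le> b \<Longrightarrow> mult c a \<le> mult c b"
  using mult_Join[of "{a, b}" c] Join_upper[OF joins_Q, of "mult c a" "{mult c a, mult c b}"]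
  by (simp add: Join_pair_eq_right)

lemma mult_mono: "a \<le> x \<Longrightarrow> b \<le> y \<Longrightarrow> mult a b \<le> mult x y"
  by (metis mult_commute mult_mono_right order.trans)

lemma act_mono_right: "m \<le> n \<Longrightarrow> act s m \<le> act s n"
  using act_Join_right[of "{m, n}" s] Join_upper[OF joins_M, of "act s m" "{act s m, act s n}"]
  by (simp add: Join_pair_eq_right)

lemma act_mono_left: "s \<le> t \<Longrightarrow> act s m \<le> act t m"
  using act_Join_left[of "{s, t}" m] Join_upper[OF joins_M, of "act s m" "{act s m, act t m}"]
  by (simp add: Join_pair_eq_right)

lemma act_le_self: "act s m \<le> m"
  using act_mono_left[OF le_unit, of s m] by (simp add: act_unit)

lemma act_left_commute: "act f (act g m) = act g (act f m)"
  by (metis act_mult mult_commute)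

lemma mfilter_unit: "mfilter mult e F \<Longrightarrow> e \<in> F"
  unfolding mfilter_def by blast

lemma mfilter_upward: "mfilter mult e F \<Longrightarrow> x \<in> F \<Longrightarrow> x \<le> y \<Longrightarrow> y \<in> F"
  unfolding mfilter_def by blast

lemma mfilter_mult: "mfilter mult e F \<Longrightarrow> x \<in> F \<Longrightarrow> y \<in> F \<Longrightarrow> mult x y \<in> F"
  unfolding mfilter_def by blast

lemma mfilter_Join_pair_in_Int:
  assumes "mfilter mult e F" "mfilter mult e G" "f \<in> F" "g \<in> G"
  shows "Join {f, g} \<in> F \<inter> G"
  using assms Join_upper[OF joins_Q, of _ "{f, g}"] by (blast intro: mfilter_upward)

lemma mfilter_mfsum: "mfilter mult e (mfsum mult e F G)"
  unfolding mfsum_def mfilter_def by blast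

lemma mfsum_commute: "mfsum mult e G F = mfsum mult e F G"
  unfolding mfsum_def by (simp add: Un_commute)

lemma mfsum_upper: "F \<subseteq> mfsum mult e F G"
  unfolding mfsum_def by blast

lemma mult_mult_swap: "mult (mult a b) (mult c d) = mult (mult a c) (mult b d)"
  by (metis mult_assoc mult_commute)

lemma mfsum_ge_mult:
  assumes F: "mfilter mult e F" and G: "mfilter mult e G" and s: "s \<in> mfsum mult e F G"
  obtains f g where "f \<in> F" "g \<in> G" "mult f g \<le> s"
proof -
  define S where "S = {x. \<exists>f\<in>F. \<exists>g\<in>G. mult f g \<le> x}"
  have "mfilter mult e S"
    unfolding mfilter_def
  proof (intro conjI allI impI)
    have "mult e e \<le> e"
      by (simp add: mult_unit)
    then show "e \<in> S"
      using mfilter_unit[OF F] mfilter_unit[OF G] unfolding S_def by blast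
    show "y \<in> S" if "x \<in> S" "x \<le> y" for x y
      using that unfolding S_def by (blast intro: order.trans)
    show "mult x y \<in> S" if xy: "x \<in> S" "y \<in> S" for x y
    proof -
      obtain f1 g1 f2 g2 where "f1 \<in> F" "g1 \<in> G" "f2 \<in> F" "g2 \<in> G"
        and "mult f1 g1 \<le> x" "mult f2 g2 \<le> y"
        using xy unfolding S_def by blast
      then have "mult (mult f1 f2) (mult g1 g2) \<le> mult x y"
        by (metis mult_mono mult_mult_swap)
      then show ?thesis
        using \<open>f1 \<in> F\<close> \<open>f2 \<in> F\<close> \<open>g1 \<in> G\<close> \<open>g2 \<in> G\<close> mfilter_mult[OF F] mfilter_mult[OF G]
        unfolding S_def by blast
    qed
  qed
  moreover have "F \<union> G \<subseteq> S"
    using mfilter_unit[OF F] mfilter_unit[OF G] unfolding S_def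
    by (force simp: mult_unit mult_commute[of _ e])
  ultimately have "s \<in> S"
    using s unfolding mfsum_def by blast
  then show thesis
    using that unfolding S_def by blast
qed

definition sat :: "'q set \<Rightarrow> 'm \<Rightarrow> 'm" where
  "sat F b = Join {c. \<exists>s\<in>F. act s c \<le> b}"

lemma sat_set_nonempty: "e \<in> F \<Longrightarrow> {c. \<exists>s\<in>F. act s c \<le> b} \<noteq> {}"
  by (metis (mono_tags) act_unit empty_iff mem_Collect_eq order_refl)

lemma le_satI: "s \<in> F \<Longrightarrow> act s c \<le> b \<Longrightarrow> c \<le> sat F b"
  unfolding sat_def by (rule Join_upper[OF joins_M]) blast

lemma le_sat_self: "e \<in> F \<Longrightarrow> b \<le> sat F b"
  by (rule le_satI[of e]) (simp_all add: act_unit)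

lemma sat_le: "e \<in> F \<Longrightarrow> (\<And>s c. s \<in> F \<Longrightarrow> act s c \<le> b \<Longrightarrow> c \<le> z) \<Longrightarrow> sat F b \<le> z"
  unfolding sat_def by (rule Join_least[OF joins_M sat_set_nonempty]) auto

lemma sat_mono: "e \<in> F \<Longrightarrow> b \<le> b' \<Longrightarrow> sat F b \<le> sat F b'"
  by (rule sat_le) (auto intro: le_satI order.trans)

lemma prec1_iff_le_sat:
  assumes e: "e \<in> F"
  shows "prec1 act F a b \<longleftrightarrow> a \<le> sat F b"
proof
  assume "prec1 act F a b"
  then obtain I :: "('m \<times> 'q) set" and as s where "I \<noteq> {}" "a \<le> Join (as ` I)"
    and "\<forall>i\<in>I. s i \<in> F \<and> act (s i) (as i) \<le> b"
    unfolding prec1_def by blast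
  moreover from this have "Join (as ` I) \<le> sat F b"
    by (intro Join_least[OF joins_M]) (auto intro: le_satI)
  ultimately show "a \<le> sat F b"
    by (blast intro: order.trans)
next
  let ?I = "{(c, s). s \<in> F \<and> act s c \<le> b}"
  assume "a \<le> sat F b"
  moreover have "fst ` ?I = {c. \<exists>s\<in>F. act s c \<le> b}"
    by (auto simp: fst_eq_Domain)
  moreover have "(b, e) \<in> ?I"
    using e by (simp add: act_unit)
  ultimately show "prec1 act F a b"
    unfolding prec1_def sat_def
    by (intro exI[of _ ?I] exI[of _ fst] exI[of _ snd]) auto
qed

lemma precn_refl: "e \<in> F \<Longrightarrow> precn act F n b b"
  by (induction n) (auto simp: precn_0 precn_Suc prec1_iff_le_sat intro!: exI[of _ b] le_sat_self)

lemma precn_Suc_antimono: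
  assumes e: "e \<in> F" and "a' \<le> a" and "precn act F (Suc n) a b"
  shows "precn act F (Suc n) a' b"
  using assms(2,3) unfolding precn_Suc prec1_iff_le_sat[OF e] by (meson order.trans)

lemma precn_Join_pair:
  assumes e: "e \<in> F"
  shows "precn act F n a1 b \<Longrightarrow> precn act F n a2 b \<Longrightarrow> precn act F n (Join {a1, a2}) b"
proof (induction n arbitrary: a1 a2)
  case 0
  then show ?case by (simp add: precn_0 Join_singleton)
next
  case (Suc n)
  obtain c1 c2 where a: "a1 \<le> sat F c1" "a2 \<le> sat F c2"
    and c: "precn act F n c1 b" "precn act F n c2 b"
    using Suc.prems unfolding precn_Suc prec1_iff_le_sat[OF e] by blast
  have "sat F c1 \<le> sat F (Join {c1, c2})" "sat F c2 \<le> sat F (Join {c1, c2})"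
    using e by (auto intro: sat_mono Join_upper[OF joins_M])
  with a have "Join {a1, a2} \<le> sat F (Join {c1, c2})"
    by (intro Join_least[OF joins_M]) (auto intro: order.trans)
  moreover have "precn act F n (Join {c1, c2}) b"
    using Suc.IH[OF c] .
  ultimately show ?case
    unfolding precn_Suc prec1_iff_le_sat[OF e] by blast
qed

lemma mfilter_uniform_witness:
  assumes F: "mfilter mult e F" and "finite S" and "\<forall>c\<in>S. \<exists>s\<in>F. act s c \<le> m"
  shows "\<exists>f\<in>F. \<forall>c\<in>S. act f c \<le> m"
  using assms(2,3)
proof (induction S rule: finite_induct)
  case empty
  then show ?case using mfilter_unit[OF F] by blast
next
  case (insert x S)
  then obtain f s where "f \<in> F" "\<forall>c\<in>S. act f c \<le> m" "s \<in> F" "act s x \<le> m"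
    by blast
  moreover have "act (mult f s) c \<le> act f c" "act (mult f s) c \<le> act s c" for c
    by (metis act_le_self act_mult act_left_commute)+
  ultimately show ?case
    using mfilter_mult[OF F] by (blast intro: order.trans)
qed

lemma le_sat_shrink:
  assumes F: "mfilter mult e F" and sh: "shrinkable TYPE('m)" and x: "x \<le> sat F m"
  obtains T where "T \<noteq> {}" "x = Join T" "\<And>t. t \<in> T \<Longrightarrow> \<exists>f\<in>F. act f t \<le> m"
proof -
  obtain T where T: "T \<noteq> {}" "x = Join T" and fin: "\<And>t. t \<in> T \<Longrightarrow>
      \<exists>S0\<subseteq>{c. \<exists>s\<in>F. act s c \<le> m}. finite S0 \<and> S0 \<noteq> {} \<and> t \<le> Join S0"
    using shrinkable_setD[OF sh sat_set_nonempty[OF mfilter_unit[OF F]] x[unfolded sat_def]]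
    by blast
  have "\<exists>f\<in>F. act f t \<le> m" if t: "t \<in> T" for t
  proof -
    obtain S0 where S0: "S0 \<subseteq> {c. \<exists>s\<in>F. act s c \<le> m}" "finite S0" "S0 \<noteq> {}" "t \<le> Join S0"
      using fin[OF t] by blast
    then obtain f where "f \<in> F" and f: "\<forall>c\<in>S0. act f c \<le> m"
      using mfilter_uniform_witness[OF F S0(2)] by blast
    have "act f t \<le> Join (act f ` S0)"
      using act_mono_right[OF S0(4), of f] act_Join_right[OF S0(3), of f] by simp
    also have "\<dots> \<le> m"
      using S0(3) f by (intro Join_least[OF joins_M]) auto
    finally show ?thesis
      using \<open>f \<in> F\<close> by blast
  qed
  with T show thesis
    by (rule that)
qed

lemma le_sat_both_le:
  assumes F: "mfilter mult e F" and G: "mfilter mult e G" and sh: "shrinkable TYPE('m)"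
    and xF: "x \<le> sat F m" and xG: "x \<le> sat G y"
    and bound: "\<And>f g z. f \<in> F \<Longrightarrow> g \<in> G \<Longrightarrow> act f z \<le> m \<Longrightarrow> act g z \<le> y \<Longrightarrow> z \<le> w"
  shows "x \<le> w"
proof -
  obtain T where T: "T \<noteq> {}" "x = Join T" and Tm: "\<And>t. t \<in> T \<Longrightarrow> \<exists>f\<in>F. act f t \<le> m"
    using le_sat_shrink[OF F sh xF] by blast
  have "t \<le> w" if t: "t \<in> T" for t
  proof -
    obtain f where "f \<in> F" "act f t \<le> m"
      using Tm[OF t] by blast
    have "t \<le> sat G y"
      using Join_upper[OF joins_M t] xG T(2) by (blast intro: order.trans)
    then obtain U where U: "U \<noteq> {}" "t = Join U" and Uy: "\<And>u. u \<in> U \<Longrightarrow> \<exists>g\<in>G. act g u \<le> y"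
      using le_sat_shrink[OF G sh] by blast
    have "act f u \<le> m" if "u \<in> U" for u
      using act_mono_right[OF Join_upper[OF joins_M that]] U(2) \<open>act f t \<le> m\<close>
      by (blast intro: order.trans)
    then show "t \<le> w"
      unfolding U(2) using \<open>f \<in> F\<close> Uy bound by (blast intro: Join_least[OF joins_M U(1)])
  qed
  then show ?thesis
    unfolding T(2) by (rule Join_least[OF joins_M T(1)])
qed

text \<open>The witness m' is the join of all elements lying below y, or below both m and
  sat G y: this set contains f z and g z whenever f z \<le> m and g z \<le> y, because
  g (f z) = f (g z) \<le> y.\<close>
lemma le_sat_Int_witness:
  assumes F: "mfilter mult e F" and G: "mfilter mult e G" and sh: "shrinkable TYPE('m)"
    and xF: "x \<le> sat F m" and xG: "x \<le> sat G y"
  obtains m' where "x \<le> sat (F \<inter> G) m'" "m' \<le> Join {m, y}" "m' \<le> sat G y"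
proof -
  have eG: "e \<in> G"
    using G by (rule mfilter_unit)
  define W where "W = {w. (w \<le> m \<and> w \<le> sat G y) \<or> w \<le> y}"
  have W_ne: "W \<noteq> {}"
    unfolding W_def by blast
  have "Join W \<le> Join {m, y}"
  proof (rule Join_least[OF joins_M W_ne])
    show "w \<le> Join {m, y}" if "w \<in> W" for w
      using that Join_upper[OF joins_M, of _ "{m, y}"] unfolding W_def by (blast intro: order.trans)
  qed
  moreover have "Join W \<le> sat G y"
  proof (rule Join_least[OF joins_M W_ne])
    show "w \<le> sat G y" if "w \<in> W" for w
      using that le_sat_self[OF eG, of y] unfolding W_def by (blast intro: order.trans)
  qed
  moreover have "x \<le> sat (F \<inter> G) (Join W)"
    using F G sh xF xG
  proof (rule le_sat_both_le)
    fix f g z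
    assume fg: "f \<in> F" "g \<in> G" and "act f z \<le> m" "act g z \<le> y"
    moreover have "act g (act f z) \<le> y"
      using \<open>act g z \<le> y\<close> by (metis act_left_commute act_le_self order.trans)
    ultimately have "act f z \<in> W" "act g z \<in> W"
      unfolding W_def by (auto intro: le_satI)
    then have "Join {act f z, act g z} \<le> Join W"
      by (intro Join_least[OF joins_M]) (auto intro: Join_upper[OF joins_M])
    then have "act (Join {f, g}) z \<le> Join W"
      using act_Join_left[of "{f, g}" z] by simp
    then show "z \<le> sat (F \<inter> G) (Join W)"
      using mfilter_Join_pair_in_Int[OF F G fg] by (rule le_satI[rotated])
  qed
  ultimately show thesis
    using that by blast
qed

lemma precn_Int_filter:
  assumes F: "mfilter mult e F" and G: "mfilter mult e G" and sh: "shrinkable TYPE('m)"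
    and "precn act F (Suc n) x y" and "prec1 act G x y"
  shows "precn act (F \<inter> G) (Suc n) x y"
proof -
  have eF: "e \<in> F" and eG: "e \<in> G" and eFG: "e \<in> F \<inter> G"
    using F G by (auto intro: mfilter_unit)
  from assms(4,5) show ?thesis
  proof (induction n arbitrary: x)
    case 0
    then have "x \<le> sat F y" "x \<le> sat G y"
      by (simp_all add: precn_Suc_0 prec1_iff_le_sat[OF eF] prec1_iff_le_sat[OF eG])
    then obtain m' where "x \<le> sat (F \<inter> G) m'" "m' \<le> y"
      using le_sat_Int_witness[OF F G sh] by (metis Join_singleton insert_absorb2)
    then have "x \<le> sat (F \<inter> G) y"
      using sat_mono[OF eFG] by (blast intro: order.trans)
    then show ?case
      by (simp add: precn_Suc_0 prec1_iff_le_sat[OF eFG])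
  next
    case (Suc n)
    obtain m where "x \<le> sat F m" "precn act F (Suc n) m y"
      using Suc.prems(1) by (auto simp: precn_Suc[of _ _ "Suc n"] prec1_iff_le_sat[OF eF])
    moreover have "x \<le> sat G y"
      using Suc.prems(2) by (simp add: prec1_iff_le_sat[OF eG])
    ultimately obtain m' where m': "x \<le> sat (F \<inter> G) m'" "m' \<le> Join {m, y}" "m' \<le> sat G y"
      using le_sat_Int_witness[OF F G sh] by blast
    have "precn act F (Suc n) (Join {m, y}) y"
      using precn_Join_pair[OF eF \<open>precn act F (Suc n) m y\<close> precn_refl[OF eF]] .
    then have "precn act F (Suc n) m' y"
      by (rule precn_Suc_antimono[OF eF m'(2)])
    moreover have "prec1 act G m' y"
      using m'(3) by (simp add: prec1_iff_le_sat[OF eG])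
    ultimately have "precn act (F \<inter> G) (Suc n) m' y"
      by (rule Suc.IH)
    then show ?case
      using m'(1) by (auto simp: precn_Suc[of _ _ "Suc n"] prec1_iff_le_sat[OF eFG])
  qed
qed

lemma le_sat_mfsum_split:
  assumes F: "mfilter mult e F" and G: "mfilter mult e G" and sh: "shrinkable TYPE('m)"
    and a: "a \<le> sat (mfsum mult e F G) b"
  obtains d where "d \<le> a" "a \<le> sat F d" "d \<le> sat G b"
proof -
  obtain T where T: "T \<noteq> {}" "a = Join T"
    and Tb: "\<And>t. t \<in> T \<Longrightarrow> \<exists>s\<in>mfsum mult e F G. act s t \<le> b"
    using le_sat_shrink[OF mfilter_mfsum sh a] by blast
  define D where "D = {w. w \<le> a \<and> w \<le> sat G b}"
  have ex: "\<exists>f\<in>F. act f t \<in> D" if t: "t \<in> T" for t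
  proof -
    obtain s where s: "s \<in> mfsum mult e F G" "act s t \<le> b"
      using Tb[OF t] by blast
    obtain f g where "f \<in> F" "g \<in> G" "mult f g \<le> s"
      using mfsum_ge_mult[OF F G s(1)] .
    have "act g (act f t) = act (mult f g) t"
      by (metis act_mult mult_commute)
    also have "\<dots> \<le> b"
      using act_mono_left[OF \<open>mult f g \<le> s\<close>] s(2) by (rule order.trans)
    finally have "act f t \<le> sat G b"
      by (rule le_satI[OF \<open>g \<in> G\<close>])
    moreover have "t \<le> a"
      unfolding T(2) using t by (rule Join_upper[OF joins_M])
    then have "act f t \<le> a"
      using act_le_self by (rule order.trans[rotated])
    ultimately show ?thesis
      using \<open>f \<in> F\<close> unfolding D_def by blast
  qed
  have D_ne: "D \<noteq> {}"
    using ex T(1) by blast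
  show thesis
  proof (rule that)
    show "Join D \<le> a" "Join D \<le> sat G b"
      by (rule Join_least[OF joins_M D_ne], simp add: D_def)+
    show "a \<le> sat F (Join D)"
      unfolding T(2)
    proof (rule Join_least[OF joins_M T(1)])
      fix t
      assume "t \<in> T"
      then obtain f where "f \<in> F" "act f t \<in> D"
        using ex by blast
      then show "t \<le> sat F (Join D)"
        by (intro le_satI[of f]) (auto intro: Join_upper[OF joins_M])
    qed
  qed
qed

lemma prec_factors_through_Int:
  assumes F: "mfilter mult e F" and G: "mfilter mult e G" and sh: "shrinkable TYPE('m)"
    and os: "one_step act (mfsum mult e F G)" and p: "prec act F a b"
  obtains d n where "prec1 act F a d" "precn act (F \<inter> G) (Suc n) d b"
proof -
  have eF: "e \<in> F" and eG: "e \<in> G"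
    using F G by (auto intro: mfilter_unit)
  obtain n where n: "precn act F (Suc n) a b"
    using p by (auto simp: prec_iff_precn_Suc)
  have "prec1 act (mfsum mult e F G) a b"
    using one_stepD[OF os prec_mono_filter[OF mfsum_upper p]] .
  then have "a \<le> sat (mfsum mult e F G) b"
    by (simp add: prec1_iff_le_sat[OF mfilter_unit[OF mfilter_mfsum]])
  then obtain d where d: "d \<le> a" "a \<le> sat F d" "d \<le> sat G b"
    by (rule le_sat_mfsum_split[OF F G sh])
  have "precn act (F \<inter> G) (Suc n) d b"
    using precn_Int_filter[OF F G sh precn_Suc_antimono[OF eF d(1) n]] d(3)
    by (simp add: prec1_iff_le_sat[OF eG])
  moreover have "prec1 act F a d"
    using d(2) by (simp add: prec1_iff_le_sat[OF eF])
  ultimately show thesis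
    using that by blast
qed

lemma precn_trivial_le:
  assumes triv: "\<forall>s\<in>K. \<forall>m. act s m = m" and e: "e \<in> K"
  shows "precn act K n x y \<Longrightarrow> x \<le> y"
proof (induction n arbitrary: x)
  case 0
  then show ?case by (simp add: precn_0)
next
  case (Suc n)
  then obtain c where "x \<le> sat K c" "c \<le> y"
    by (auto simp: precn_Suc prec1_iff_le_sat[OF e])
  moreover have "sat K c \<le> c"
    using e triv by (auto intro: sat_le)
  ultimately show ?case
    by (blast intro: order.trans)
qed

lemma localizable_if_between_localizable:
  assumes F: "mfilter mult e F" and G: "mfilter mult e G" and sh: "shrinkable TYPE('m)"
    and os: "one_step act (mfsum mult e F G)"
    and H: "localizable act H" "F \<inter> G \<subseteq> H" "H \<subseteq> F"
  shows "localizable act F"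
  unfolding localizable_def
proof
  fix b
  obtain nb where "nb \<ge> 1" and nb: "\<And>a. prec act H a b \<Longrightarrow> precn act H nb a b"
    using H(1) unfolding localizable_def by blast
  have "precn act F (Suc nb) a b" if p: "prec act F a b" for a
  proof -
    obtain d n where "prec1 act F a d" "precn act (F \<inter> G) (Suc n) d b"
      using prec_factors_through_Int[OF F G sh os p] .
    then have "precn act F nb d b"
      using nb precn_mono_filter[OF H(2)] precn_mono_filter[OF H(3)] prec_iff_precn_Suc by meson
    then show ?thesis
      using \<open>prec1 act F a d\<close> by (auto simp: precn_Suc)
  qed
  then show "\<exists>n\<ge>1. \<forall>a. prec act F a b \<longrightarrow> precn act F n a b"
    by (intro exI[of _ "Suc nb"]) auto
qed

lemma one_step_if_Int_acts_trivially:
  assumes F: "mfilter mult e F" and G: "mfilter mult e G" and sh: "shrinkable TYPE('m)"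
    and os: "one_step act (mfsum mult e F G)" and triv: "\<forall>s\<in>F \<inter> G. \<forall>m. act s m = m"
  shows "one_step act F"
proof -
  have eF: "e \<in> F" and eFG: "e \<in> F \<inter> G"
    using F G by (auto intro: mfilter_unit)
  have one: "prec1 act F a b" if p: "prec act F a b" for a b
  proof -
    obtain d n where "prec1 act F a d" "precn act (F \<inter> G) (Suc n) d b"
      using prec_factors_through_Int[OF F G sh os p] .
    then have "a \<le> sat F d" "d \<le> b"
      using precn_trivial_le[OF triv eFG] by (auto simp: prec1_iff_le_sat[OF eF])
    then show ?thesis
      using sat_mono[OF eF] by (auto simp: prec1_iff_le_sat[OF eF] intro: order.trans)
  qed
  then have "localizable act F"
    unfolding localizable_def by (metis order_refl precn_Suc_0 One_nat_def)
  with one show ?thesis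
    unfolding one_step_def by blast
qed

end

theorem mainTheorem6:
  fixes mult :: "'q::order \<Rightarrow> 'q \<Rightarrow> 'q" and e :: 'q
    and act :: "'q \<Rightarrow> 'm::order \<Rightarrow> 'm"
    and F G :: "'q set"
  assumes "quantale mult e"
    and "qmodule mult e act"
    and "shrinkable TYPE('m)"
    and "mfilter mult e F" and "mfilter mult e G"
    and "one_step act (mfsum mult e F G)"
  shows "((\<exists>H. mfilter mult e H \<and> localizable act H \<and> F \<inter> G \<subseteq> H \<and> H \<subseteq> F)
            \<longrightarrow> localizable act F)
      \<and> ((\<forall>s\<in>F \<inter> G. \<forall>m. act s m = m) \<longrightarrow> one_step act F \<and> one_step act G)"
proof -
  interpret quantale_module mult e act
    using assms(1,2) by unfold_locales
  have os': "one_step act (mfsum mult e G F)"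
    using assms(6) by (simp add: mfsum_commute)
  show ?thesis
    using localizable_if_between_localizable[OF assms(4,5,3,6)]
      one_step_if_Int_acts_trivially[OF assms(4,5,3,6)]
      one_step_if_Int_acts_trivially[OF assms(5,4,3) os']
    by (auto simp: Int_commute)
qed

end
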